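(* Let $m'\ge 2$ be an integer and $p\in(0,1/2)$ a constant. There exists an integer $M_{p,m'}$, depending only on $p$ and $m'$, such that for every integer $n'>M_{p,m'}$, $$\sum_{\substack{\ell\ge\mu\ge m'\\ \ell+\mu\le n'}}\binom{n'}{\ell+\mu}\binom{\ell+\mu}{\ell}\left(\frac{p}{1-p}\right)^{\ell\mu}\le 2\binom{n'}{m'}\left(1+\left(\frac{p}{1-p}\right)^{m'}\right)^{n'},$$ where the sum is over integers $\ell,\mu$. Moreover, if $p<0.01$, this inequality holds for all integers $m'\ge 2$ and $n'\ge 2m'$. *)

theory Defs
  imports Complex_Main
begin

text \<open>Left-hand side of the inequality: sum over integers l, mu with
  l \<ge> mu \<ge> m' and l + mu \<le> n' (all nonnegative since m' \<ge> 2).\<close>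
definition lhs_sum :: "real \<Rightarrow> nat \<Rightarrow> nat \<Rightarrow> real" where
  "lhs_sum p m' n' =
     (\<Sum>(l, \<mu>) \<in> {(l, \<mu>). \<mu> \<le> l \<and> m' \<le> \<mu> \<and> l + \<mu> \<le> n'}.
        real (n' choose (l + \<mu>)) * real ((l + \<mu>) choose l) * (p / (1 - p)) ^ (l * \<mu>))"

definition rhs_bound :: "real \<Rightarrow> nat \<Rightarrow> nat \<Rightarrow> real" where
  "rhs_bound p m' n' = 2 * real (n' choose m') * (1 + (p / (1 - p)) ^ m') ^ n'"

end

theory Submission
  imports Defs "HOL-Real_Asymp.Real_Asymp"
begin

text \<open>Write \<open>q = p / (1 - p)\<close> and group the terms of the sum by \<open>k = l + \<mu>\<close>. In the
  \<open>k\<close>-th group the term with index \<open>\<mu>\<close> is at most its first term \<open>C(k,m) q\<^bsup>(k-m)m\<^esup>\<close>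
  times \<open>r\<^bsup>\<mu>-m\<^esup>\<close>, where \<open>r = (1 + (k - 2m)) \<surd>q\<^bsup>k-2m\<^esup>\<close>. Once \<open>r \<le> 1/2\<close>, which holds
  for all large \<open>k\<close>, and for every \<open>k\<close> when \<open>q \<le> 1/25\<close>, the group is at most twice its
  first term. Summed against \<open>C(n,k)\<close>, the first terms give exactly \<open>C(n,m) (1 + q\<^sup>m)\<^bsup>n-m\<^esup>\<close>
  by the binomial theorem. The finitely many remaining groups contribute a polynomial in \<open>n\<close>,
  which the exponential gap between \<open>(1 + q\<^sup>m)\<^bsup>n-m\<^esup>\<close> and \<open>(1 + q\<^sup>m)\<^sup>n\<close> absorbs.\<close>

lemma binomial_shift_mult_le:
  assumes "m + d \<le> k"
  shows "(k choose (m + d)) * (m + 1) ^ d \<le> (k choose m) * (k - m) ^ d"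
  using assms
proof (induction d)
  case (Suc d)
  have step: "Suc (m + d) * (k choose Suc (m + d)) = (k - (m + d)) * (k choose (m + d))"
    by (metis binomial_absorption binomial_absorb_comp)
  have "(m + 1) ^ Suc d \<le> Suc (m + d) * (m + 1) ^ d"
    by simp
  then have "(k choose (m + Suc d)) * (m + 1) ^ Suc d
      \<le> (k choose Suc (m + d)) * (Suc (m + d) * (m + 1) ^ d)"
    by simp
  also have "\<dots> = (Suc (m + d) * (k choose Suc (m + d))) * (m + 1) ^ d"
    by (simp only: ac_simps)
  also have "\<dots> = ((k choose (m + d)) * (m + 1) ^ d) * (k - (m + d))"
    unfolding step by (simp only: ac_simps)
  also have "\<dots> \<le> ((k choose m) * (k - m) ^ d) * (k - m)"
    by (rule mult_le_mono) (use Suc in auto)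
  finally show ?case
    by (simp add: ac_simps)
qed simp

lemma binomial_le_binomial_mult_pow:
  assumes "m \<le> \<mu>" "2 * \<mu> \<le> k"
  shows "k choose \<mu> \<le> (k choose m) * (1 + (k - 2 * m)) ^ (\<mu> - m)"
proof -
  define d where "d = \<mu> - m"
  have "(k choose \<mu>) * (m + 1) ^ d \<le> (k choose m) * (k - m) ^ d"
    using binomial_shift_mult_le[of m d k] assms unfolding d_def by simp
  also have "\<dots> \<le> (k choose m) * ((1 + (k - 2 * m)) * (m + 1)) ^ d"
  proof -
    obtain j where "k = 2 * m + j"
      using assms le_Suc_ex[of "2 * m" k] by auto
    then show ?thesis
      by (intro mult_le_mono2 power_mono) (simp_all add: algebra_simps)
  qed
  also have "\<dots> = ((k choose m) * (1 + (k - 2 * m)) ^ d) * (m + 1) ^ d"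
    by (simp only: power_mult_distrib mult.assoc)
  finally show ?thesis
    unfolding d_def by simp
qed

lemma binomial_power_term_le:
  fixes q :: real
  assumes "0 \<le> q" "q \<le> 1" "m \<le> \<mu>" "2 * \<mu> \<le> k"
  shows "real (k choose \<mu>) * q ^ ((k - \<mu>) * \<mu>)
    \<le> real (k choose m) * q ^ ((k - m) * m) * ((1 + real (k - 2 * m)) * sqrt q ^ (k - 2 * m)) ^ (\<mu> - m)"
proof -
  obtain d where d: "\<mu> = m + d"
    using assms le_Suc_ex by blast
  obtain e where e: "k = 2 * m + 2 * d + e"
    using assms le_Suc_ex[of "2 * m + 2 * d" k] d by auto
  have "(k - \<mu>) * \<mu> = (k - m) * m + d * (d + e)"
    using d e by (simp add: algebra_simps)
  then have split: "q ^ ((k - \<mu>) * \<mu>) = q ^ ((k - m) * m) * q ^ (d * (d + e))"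
    by (simp add: power_add)
  have "(k - 2 * m) * (\<mu> - m) = d * (2 * d + e)"
    using d e by simp
  then have "(k - 2 * m) * (\<mu> - m) \<le> 2 * (d * (d + e))"
    by (simp add: algebra_simps)
  then have "sqrt q ^ (2 * (d * (d + e))) \<le> sqrt q ^ ((k - 2 * m) * (\<mu> - m))"
    using assms by (intro power_decreasing) auto
  then have "q ^ (d * (d + e)) \<le> (sqrt q ^ (k - 2 * m)) ^ (\<mu> - m)"
    using assms by (simp add: power_mult)
  moreover have "real (k choose \<mu>) \<le> real (k choose m) * (1 + real (k - 2 * m)) ^ (\<mu> - m)"
    using binomial_le_binomial_mult_pow[OF assms(3,4)] of_nat_mono by fastforce
  ultimately have "real (k choose \<mu>) * q ^ (d * (d + e))
      \<le> (real (k choose m) * (1 + real (k - 2 * m)) ^ (\<mu> - m)) * (sqrt q ^ (k - 2 * m)) ^ (\<mu> - m)"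
    using assms by (intro mult_mono) auto
  then have "real (k choose \<mu>) * q ^ (d * (d + e)) * q ^ ((k - m) * m)
      \<le> (real (k choose m) * (1 + real (k - 2 * m)) ^ (\<mu> - m)) * (sqrt q ^ (k - 2 * m)) ^ (\<mu> - m)
         * q ^ ((k - m) * m)"
    using assms by (intro mult_right_mono) auto
  then show ?thesis
    unfolding split by (simp add: power_mult_distrib mult_ac)
qed

definition antidiagonal_sum :: "real \<Rightarrow> nat \<Rightarrow> nat \<Rightarrow> real" where
  "antidiagonal_sum q m k = (\<Sum>\<mu>\<in>{m..k div 2}. real (k choose \<mu>) * q ^ ((k - \<mu>) * \<mu>))"

definition lead_term :: "real \<Rightarrow> nat \<Rightarrow> nat \<Rightarrow> real" where
  "lead_term q m k = real (k choose m) * q ^ ((k - m) * m)"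

lemma antidiagonal_sum_le_twice_lead_term:
  assumes "0 \<le> q" "q \<le> 1"
    and ratio_le: "2 * m + 1 < k \<Longrightarrow> (1 + real (k - 2 * m)) * sqrt q ^ (k - 2 * m) \<le> 1/2"
  shows "antidiagonal_sum q m k \<le> 2 * lead_term q m k"
proof -
  have lead_nonneg: "0 \<le> lead_term q m k"
    unfolding lead_term_def using assms by simp
  have term_le: "real (k choose \<mu>) * q ^ ((k - \<mu>) * \<mu>) \<le> lead_term q m k * (1/2) ^ (\<mu> - m)"
    if "\<mu> \<in> {m..k div 2}" for \<mu>
  proof -
    have \<mu>: "m \<le> \<mu>" "2 * \<mu> \<le> k"
      using that by auto
    define r where "r = (1 + real (k - 2 * m)) * sqrt q ^ (k - 2 * m)"
    have "r ^ (\<mu> - m) \<le> (1/2) ^ (\<mu> - m)"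
    proof (cases "2 * m + 1 < k")
      case True
      then show ?thesis
        using ratio_le assms unfolding r_def by (intro power_mono) auto
    next
      case False
      then show ?thesis
        using \<mu> by (simp add: le_antisym)
    qed
    then have "lead_term q m k * r ^ (\<mu> - m) \<le> lead_term q m k * (1/2) ^ (\<mu> - m)"
      using lead_nonneg by (rule mult_left_mono)
    then show ?thesis
      using binomial_power_term_le[OF assms(1,2) \<mu>] unfolding lead_term_def r_def by linarith
  qed
  have "antidiagonal_sum q m k \<le> (\<Sum>\<mu>\<in>{m..k div 2}. lead_term q m k * (1/2) ^ (\<mu> - m))"
    unfolding antidiagonal_sum_def by (rule sum_mono) (rule term_le)
  also have "\<dots> \<le> lead_term q m k * (\<Sum>i\<le>k div 2 - m. (1/2) ^ i)"
    using lead_nonneg by (cases "m \<le> k div 2")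
       (simp_all add: sum_distrib_left sum.atLeastAtMost_shift_0 atLeast0AtMost comp_def)
  also have "\<dots> \<le> lead_term q m k * 2"
    using geometric_sum_less[of "1/2 :: real" "{..k div 2 - m}"] lead_nonneg
    by (intro mult_left_mono) auto
  finally show ?thesis
    by simp
qed

lemma antidiagonal_sum_le_pow2:
  assumes "0 \<le> q" "q \<le> 1"
  shows "antidiagonal_sum q m k \<le> real (k + 1) * 2 ^ k"
proof -
  have "antidiagonal_sum q m k \<le> real (card {m..k div 2}) * 2 ^ k"
    unfolding antidiagonal_sum_def
  proof (rule sum_bounded_above)
    fix \<mu>
    have "real (k choose \<mu>) \<le> 2 ^ k"
      using binomial_le_pow2[of k \<mu>] by (metis of_nat_le_iff of_nat_numeral of_nat_power)
    moreover have "q ^ ((k - \<mu>) * \<mu>) \<le> 1"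
      using assms by (simp add: power_le_one)
    ultimately show "real (k choose \<mu>) * q ^ ((k - \<mu>) * \<mu>) \<le> 2 ^ k"
      using assms by (metis mult_left_le of_nat_0_le_iff order_trans zero_le_power)
  qed
  also have "\<dots> \<le> real (k + 1) * 2 ^ k"
    by (intro mult_right_mono) auto
  finally show ?thesis .
qed

lemma lhs_sum_eq_antidiagonal_sums:
  "lhs_sum p m n = (\<Sum>k\<le>n. real (n choose k) * antidiagonal_sum (p / (1 - p)) m k)"
proof -
  let ?q = "p / (1 - p)"
  have "lhs_sum p m n = (\<Sum>(k, \<mu>)\<in>(SIGMA k:{..n}. {m..k div 2}).
      real (n choose k) * (real (k choose \<mu>) * ?q ^ ((k - \<mu>) * \<mu>)))"
    unfolding lhs_sum_def
    by (rule sum.reindex_bij_witness[of _ "\<lambda>(k, \<mu>). (k - \<mu>, \<mu>)" "\<lambda>(l, \<mu>). (l + \<mu>, \<mu>)"])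
       (auto simp: binomial_symmetric[of b "a + b" for a b, simplified])
  also have "\<dots> = (\<Sum>k\<le>n. real (n choose k) * antidiagonal_sum ?q m k)"
    unfolding antidiagonal_sum_def by (simp add: sum.Sigma[symmetric] sum_distrib_left)
  finally show ?thesis .
qed

lemma sum_binomial_mult_lead_term:
  "(\<Sum>k\<le>n. real (n choose k) * lead_term q m k) = real (n choose m) * (1 + q ^ m) ^ (n - m)"
proof (cases "m \<le> n")
  case True
  have "(\<Sum>k\<le>n. real (n choose k) * lead_term q m k) = (\<Sum>k\<in>{m..n}. real (n choose k) * lead_term q m k)"
    by (rule sum.mono_neutral_right) (auto simp: lead_term_def)
  also have "\<dots> = (\<Sum>j\<le>n - m. real (n choose (m + j)) * lead_term q m (m + j))"
    using True by (simp add: sum.atLeastAtMost_shift_0 atLeast0AtMost comp_def)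
  also have "\<dots> = (\<Sum>j\<le>n - m. real (n choose m) * (real (n - m choose j) * (q ^ m) ^ j * 1 ^ (n - m - j)))"
  proof (rule sum.cong)
    fix j assume "j \<in> {..n - m}"
    then have "(n choose (m + j)) * (m + j choose m) = (n choose m) * (n - m choose j)"
      using choose_mult[of m "m + j" n] True by simp
    then have "real (n choose (m + j)) * real (m + j choose m) = real (n choose m) * real (n - m choose j)"
      by (metis of_nat_mult)
    moreover have "q ^ ((m + j - m) * m) = (q ^ m) ^ j"
      by (simp add: power_mult[symmetric] mult.commute)
    ultimately show "real (n choose (m + j)) * lead_term q m (m + j)
        = real (n choose m) * (real (n - m choose j) * (q ^ m) ^ j * 1 ^ (n - m - j))"
      unfolding lead_term_def by (metis mult.assoc power_one mult_1_right)
  qed simp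
  also have "\<dots> = real (n choose m) * (1 + q ^ m) ^ (n - m)"
    using binomial_ring[of "q ^ m" 1 "n - m"] by (simp add: sum_distrib_left add.commute)
  finally show ?thesis .
next
  case False
  then show ?thesis
    by (simp add: lead_term_def binomial_eq_0)
qed

lemma lhs_sum_le_lead_plus_error:
  assumes "\<And>k. k \<le> n \<Longrightarrow> antidiagonal_sum (p / (1 - p)) m k \<le> 2 * lead_term (p / (1 - p)) m k + E k"
  shows "lhs_sum p m n
    \<le> 2 * real (n choose m) * (1 + (p / (1 - p)) ^ m) ^ (n - m) + (\<Sum>k\<le>n. real (n choose k) * E k)"
proof -
  let ?q = "p / (1 - p)"
  have "lhs_sum p m n \<le> (\<Sum>k\<le>n. real (n choose k) * (2 * lead_term ?q m k + E k))"
    unfolding lhs_sum_eq_antidiagonal_sums using assms by (intro sum_mono mult_left_mono) auto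
  also have "\<dots> = 2 * (\<Sum>k\<le>n. real (n choose k) * lead_term ?q m k) + (\<Sum>k\<le>n. real (n choose k) * E k)"
    by (simp add: algebra_simps sum.distrib sum_distrib_left)
  finally show ?thesis
    by (simp add: sum_binomial_mult_lead_term)
qed

lemma sqrt_ratio_le_half:
  fixes q :: real
  assumes "0 \<le> q" "q \<le> 1/25" "1 \<le> K"
  shows "(1 + real K) * sqrt q ^ K \<le> 1/2"
proof -
  have "sqrt q \<le> 1/5"
    by (rule power2_le_imp_le) (use assms in \<open>auto simp: power2_eq_square\<close>)
  moreover have "1 + real K \<le> 2 ^ K"
    using Bernoulli_inequality[of "1 :: real" K] by simp
  ultimately have "(1 + real K) * sqrt q ^ K \<le> 2 ^ K * (1/5) ^ K"
    using assms by (intro mult_mono power_mono) auto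
  also have "\<dots> = (2/5) ^ K"
    by (simp add: power_mult_distrib[symmetric])
  also have "\<dots> \<le> 2/5"
    using power_decreasing[of 1 K "2/5 :: real"] assms by simp
  finally show ?thesis
    by simp
qed

lemma lhs_sum_le_rhs_bound_if_small:
  assumes "0 \<le> p" "p < 0.01"
  shows "lhs_sum p m n \<le> rhs_bound p m n"
proof -
  define q where "q = p / (1 - p)"
  have q: "0 \<le> q" "q \<le> 1/25"
    using assms unfolding q_def by (auto simp: field_simps)
  have "antidiagonal_sum q m k \<le> 2 * lead_term q m k + 0" for k
    using q by (simp, intro antidiagonal_sum_le_twice_lead_term sqrt_ratio_le_half) auto
  then have "lhs_sum p m n \<le> 2 * real (n choose m) * (1 + q ^ m) ^ (n - m) + (\<Sum>k\<le>n. real (n choose k) * 0)"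
    unfolding q_def by (rule lhs_sum_le_lead_plus_error)
  also have "\<dots> \<le> rhs_bound p m n"
    unfolding rhs_bound_def q_def[symmetric] using q by (simp add: mult_left_mono power_increasing)
  finally show ?thesis .
qed

lemma eventually_linear_mult_pow_le_half:
  fixes c :: real
  assumes "0 < c" "c < 1"
  shows "eventually (\<lambda>K. (1 + real K) * c ^ K \<le> 1/2) at_top"
  using assms by real_asymp

lemma eventually_poly_le_exp:
  fixes a c :: real
  assumes "0 < c" "1 < a"
  shows "eventually (\<lambda>n. (real n + 1) * real n ^ L * B \<le> c * a ^ n) at_top"
  using assms by real_asymp

lemma sum_binomial_truncated_le:
  assumes "1 \<le> n" "0 \<le> B"
  shows "(\<Sum>k\<le>n. real (n choose k) * (if k < L then B else 0)) \<le> (real n + 1) * real n ^ L * B"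
proof -
  have "(\<Sum>k\<le>n. real (n choose k) * (if k < L then B else 0)) \<le> real (card {..n}) * (real n ^ L * B)"
  proof (rule sum_bounded_above)
    fix k
    have "n choose k \<le> n ^ L" if "k < L"
    proof (cases "k \<le> n")
      case True
      then have "n choose k \<le> n ^ k"
        by (rule binomial_le_pow)
      also have "\<dots> \<le> n ^ L"
        using assms that by (intro power_increasing) auto
      finally show ?thesis .
    qed (simp add: binomial_eq_0)
    then show "real (n choose k) * (if k < L then B else 0) \<le> real n ^ L * B"
      using assms by (simp add: mult_right_mono flip: of_nat_power)
  qed
  then show ?thesis
    by (simp add: mult.assoc add.commute)
qed

lemma binomial_mult_pow_plus_le:
  fixes x :: real
  assumes "1 \<le> m" "m \<le> n" "0 \<le> x"
  shows "real (n choose m) * (1 + x) ^ (n - m) + x * (1 + x) ^ (n - m) \<le> real (n choose m) * (1 + x) ^ n"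
proof -
  have "1 \<le> real (n choose m)"
    using assms by (simp add: Suc_leI)
  then have "x \<le> real (n choose m) * x"
    using mult_right_mono[of 1 "real (n choose m)" x] assms by simp
  then have "real (n choose m) * (1 + x) ^ (n - m) + x * (1 + x) ^ (n - m)
      \<le> real (n choose m) * (1 + x) ^ (n - m) + real (n choose m) * x * (1 + x) ^ (n - m)"
    using assms by (intro add_left_mono mult_right_mono) auto
  also have "\<dots> = real (n choose m) * (1 + x) ^ Suc (n - m)"
    by (simp add: algebra_simps)
  also have "\<dots> \<le> real (n choose m) * (1 + x) ^ n"
    using assms by (intro mult_left_mono power_increasing) auto
  finally show ?thesis .
qed

lemma antidiagonal_sum_le_lead_term_except_finitely_many:
  assumes "0 < q" "q < 1"
  obtains L B where "0 \<le> B"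
    and "\<And>k. antidiagonal_sum q m k \<le> 2 * lead_term q m k + (if k < L then B else 0)"
proof -
  obtain K0 where K0: "\<And>K. K0 \<le> K \<Longrightarrow> (1 + real K) * sqrt q ^ K \<le> 1/2"
    using eventually_linear_mult_pow_le_half[of "sqrt q"] assms
    by (auto simp: eventually_at_top_linorder)
  define L where "L = 2 * m + K0"
  define B where "B = real (L + 1) * 2 ^ L"
  have "antidiagonal_sum q m k \<le> 2 * lead_term q m k + (if k < L then B else 0)" for k
  proof (cases "k < L")
    case True
    have "antidiagonal_sum q m k \<le> real (k + 1) * 2 ^ k"
      using assms by (intro antidiagonal_sum_le_pow2) auto
    also have "\<dots> \<le> B"
      unfolding B_def using True by (intro mult_mono power_increasing) auto
    moreover have "0 \<le> lead_term q m k"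
      using assms by (simp add: lead_term_def)
    ultimately show ?thesis
      using True by simp
  next
    case False
    then have "(1 + real (k - 2 * m)) * sqrt q ^ (k - 2 * m) \<le> 1/2"
      by (intro K0) (simp add: L_def)
    then have "antidiagonal_sum q m k \<le> 2 * lead_term q m k"
      using assms by (intro antidiagonal_sum_le_twice_lead_term) auto
    with False show ?thesis
      by simp
  qed
  moreover have "0 \<le> B"
    unfolding B_def by simp
  ultimately show thesis
    using that by blast
qed

lemma eventually_lhs_sum_le_rhs_bound:
  assumes "1 \<le> m" "0 < p" "p < 1/2"
  shows "eventually (\<lambda>n. lhs_sum p m n \<le> rhs_bound p m n) at_top"
proof -
  define q where "q = p / (1 - p)"
  define a where "a = 1 + q ^ m"
  have q: "0 < q" "q < 1"
    using assms unfolding q_def by (auto simp: field_simps)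
  then have a: "1 < a"
    unfolding a_def by simp
  obtain L B where B: "0 \<le> B"
    and antidiagonal: "\<And>k. antidiagonal_sum q m k \<le> 2 * lead_term q m k + (if k < L then B else 0)"
    using antidiagonal_sum_le_lead_term_except_finitely_many[OF q] by blast
  \<comment> \<open>The error from the finitely many levels \<open>k < L\<close> grows only polynomially in \<open>n\<close>,
    so it is eventually absorbed by the slack \<open>2 q\<^sup>m a\<^bsup>n - m\<^esup>\<close> left by \<open>binomial_mult_pow_plus_le\<close>.\<close>
  have "eventually (\<lambda>n. (real n + 1) * real n ^ L * B \<le> (2 * q ^ m / a ^ m) * a ^ n) at_top"
    using q a by (intro eventually_poly_le_exp) auto
  moreover have "eventually (\<lambda>n. max m 1 \<le> n) at_top"
    by (rule eventually_ge_at_top)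
  ultimately show ?thesis
  proof eventually_elim
    case (elim n)
    then have n: "m \<le> n" "1 \<le> n"
      by auto
    have "(2 * q ^ m / a ^ m) * a ^ n = 2 * q ^ m * a ^ (n - m)"
      using n a by (simp add: power_diff)
    then have error: "(\<Sum>k\<le>n. real (n choose k) * (if k < L then B else 0)) \<le> 2 * q ^ m * a ^ (n - m)"
      using sum_binomial_truncated_le[OF n(2) B, of L] elim by simp
    have "lhs_sum p m n
        \<le> 2 * real (n choose m) * a ^ (n - m) + (\<Sum>k\<le>n. real (n choose k) * (if k < L then B else 0))"
      using antidiagonal unfolding q_def a_def by (rule lhs_sum_le_lead_plus_error)
    also have "\<dots> \<le> 2 * (real (n choose m) * a ^ (n - m) + q ^ m * a ^ (n - m))"
      using error by simp
    also have "\<dots> \<le> rhs_bound p m n"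
      using binomial_mult_pow_plus_le[of m n "q ^ m"] n q assms
      unfolding rhs_bound_def q_def[symmetric] a_def by simp
    finally show ?case .
  qed
qed

theorem mainTheorem5:
  fixes p :: real and m' :: nat
  assumes "m' \<ge> 2" and "0 < p" and "p < 1/2"
  shows "(\<exists>M::nat. \<forall>n'::nat. n' > M \<longrightarrow> lhs_sum p m' n' \<le> rhs_bound p m' n')
         \<and> (p < 0.01 \<longrightarrow> (\<forall>n'::nat. n' \<ge> 2 * m' \<longrightarrow> lhs_sum p m' n' \<le> rhs_bound p m' n'))"
proof
  obtain M where "\<And>n. M \<le> n \<Longrightarrow> lhs_sum p m' n \<le> rhs_bound p m' n"
    using eventually_lhs_sum_le_rhs_bound[of m' p] assms by (auto simp: eventually_at_top_linorder)
  then show "\<exists>M::nat. \<forall>n'::nat. n' > M \<longrightarrow> lhs_sum p m' n' \<le> rhs_bound p m' n'"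
    by (meson less_imp_le)
next
  show "p < 0.01 \<longrightarrow> (\<forall>n'::nat. n' \<ge> 2 * m' \<longrightarrow> lhs_sum p m' n' \<le> rhs_bound p m' n')"
    using assms by (simp add: lhs_sum_le_rhs_bound_if_small)
qed

end
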